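(* Let $f_j$, $j\in J=\{1,\dots,m\}$, be functions on $\mathbb{R}^n$, each strongly convex with constant $\mu_j>0$; let $D=\{x: f_j(x)\le 0,\ j\in J\}$ satisfy the Slater condition; let $f$ be a convex function attaining its minimum on $D$, such that no point of absolute minimum of $f$ on $\mathbb{R}^n$ (if one exists) lies in $\operatorname{int}D$. Let $x^*$ be the (unique) solution of $\min\{f(x):x\in D\}$, $F(x)=\max_{j\in J} f_j(x)$, $\mu=\min_{j\in J}\mu_j$, and for $\varepsilon\ge0$ let $D_\varepsilon=\{x\in\mathbb{R}^n: F(x)\le\varepsilon\}$. Let $\varepsilon>0$ and let $y\in D_\varepsilon$, $y\ne x^*$, be such that for every $\alpha\in(0,1]$ the point $z=\alpha y+(1-\alpha)x^*$ satisfies $F(z)>0$. Then $\|y-x^*\|\le\sqrt{\varepsilon/\mu}$.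
   Context: Each set $D_j=\{x:f_j(x)\le0\}$ is assumed to have nonempty interior. *)

theory Defs
  imports "HOL-Analysis.Analysis"
begin

text \<open>Strong convexity with constant c (convention without the factor 1/2):
  f(t x + (1-t) y) \<le> t f(x) + (1-t) f(y) - c t (1-t) |x-y|^2.\<close>
definition strongly_convex_on :: "'a::real_normed_vector set \<Rightarrow> ('a \<Rightarrow> real) \<Rightarrow> real \<Rightarrow> bool" where
  "strongly_convex_on S g c \<longleftrightarrow> convex S \<and>
     (\<forall>x\<in>S. \<forall>y\<in>S. \<forall>t\<in>{0..1}.
        g (t *\<^sub>R x + (1 - t) *\<^sub>R y) \<le> t * g x + (1 - t) * g y - c * t * (1 - t) * (norm (x - y))\<^sup>2)"

end

theory Submission
  imports Defs
begin

text \<open>The maximum \<open>F\<close> of the constraints is again strongly convex with constant \<open>\<mu>\<close>.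
  Since \<open>F x\<^sup>* \<le> 0\<close> and \<open>F y \<le> \<epsilon>\<close>, strong convexity along the segment gives
  \<open>0 < F (\<alpha> y + (1 - \<alpha>) x\<^sup>*) \<le> \<alpha> \<epsilon> - \<mu> \<alpha> (1 - \<alpha>) \<parallel>y - x\<^sup>*\<parallel>\<^sup>2\<close>, i.e.
  \<open>\<mu> (1 - \<alpha>) \<parallel>y - x\<^sup>*\<parallel>\<^sup>2 < \<epsilon>\<close> for all \<open>\<alpha> \<in> (0, 1]\<close>; letting \<open>\<alpha> \<rightarrow> 0\<close> gives the bound.\<close>

lemma strongly_convex_on_antimono:
  assumes "strongly_convex_on S g c" "c' \<le> c"
  shows "strongly_convex_on S g c'"
  unfolding strongly_convex_on_def
proof (intro conjI ballI)
  show "convex S" using assms(1) unfolding strongly_convex_on_def by blast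
next
  fix x y t assume xy: "x \<in> S" "y \<in> S" and t: "t \<in> {0..1::real}"
  have "c' * t * (1 - t) * (norm (x - y))\<^sup>2 \<le> c * t * (1 - t) * (norm (x - y))\<^sup>2"
    using assms(2) t by (intro mult_right_mono) auto
  then show "g (t *\<^sub>R x + (1 - t) *\<^sub>R y) \<le> t * g x + (1 - t) * g y - c' * t * (1 - t) * (norm (x - y))\<^sup>2"
    using assms(1) xy t unfolding strongly_convex_on_def by fastforce
qed

lemma strongly_convex_on_Max:
  assumes "finite J" "J \<noteq> {}" "\<And>j. j \<in> J \<Longrightarrow> strongly_convex_on S (g j) c" "convex S"
  shows "strongly_convex_on S (\<lambda>x. Max ((\<lambda>j. g j x) ` J)) c"
  unfolding strongly_convex_on_def
proof (intro conjI ballI)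
  fix x y t assume xy: "x \<in> S" "y \<in> S" and t: "t \<in> {0..1::real}"
  let ?G = "\<lambda>x. Max ((\<lambda>j. g j x) ` J)"
  have "g j (t *\<^sub>R x + (1 - t) *\<^sub>R y) \<le> t * ?G x + (1 - t) * ?G y - c * t * (1 - t) * (norm (x - y))\<^sup>2"
    if j: "j \<in> J" for j
  proof -
    have "g j x \<le> ?G x" "g j y \<le> ?G y" using assms(1) j by auto
    then have "t * g j x + (1 - t) * g j y \<le> t * ?G x + (1 - t) * ?G y"
      using t by (intro add_mono mult_left_mono) auto
    moreover have "g j (t *\<^sub>R x + (1 - t) *\<^sub>R y) \<le> t * g j x + (1 - t) * g j y - c * t * (1 - t) * (norm (x - y))\<^sup>2"
      using assms(3)[OF j] xy t unfolding strongly_convex_on_def by blast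
    ultimately show ?thesis by linarith
  qed
  then show "?G (t *\<^sub>R x + (1 - t) *\<^sub>R y) \<le> t * ?G x + (1 - t) * ?G y - c * t * (1 - t) * (norm (x - y))\<^sup>2"
    using assms(1,2) by simp
qed (use assms(4) in blast)

lemma le_of_forall_scaled_less:
  fixes c \<epsilon> :: real
  assumes "\<forall>\<alpha>\<in>{0<..1}. c * (1 - \<alpha>) < \<epsilon>"
  shows "c \<le> \<epsilon>"
proof (rule ccontr)
  assume "\<not> c \<le> \<epsilon>"
  moreover have "0 < \<epsilon>" using bspec[OF assms, of 1] by simp
  ultimately have c: "0 < c" "\<epsilon> < c" by auto
  define \<alpha> where "\<alpha> = (c - \<epsilon>) / c"
  have "\<alpha> \<in> {0<..1}" using c \<open>0 < \<epsilon>\<close> by (simp add: \<alpha>_def)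
  then have "c * (1 - \<alpha>) < \<epsilon>" using assms by blast
  moreover have "c * (1 - \<alpha>) = \<epsilon>" using c by (simp add: \<alpha>_def field_simps)
  ultimately show False by simp
qed

lemma strongly_convex_on_sqdist_le_of_segment_pos:
  fixes g :: "'a::real_normed_vector \<Rightarrow> real"
  assumes g: "strongly_convex_on UNIV g c" and "g x \<le> \<epsilon>" "g x\<^sub>0 \<le> 0"
    and pos: "\<forall>\<alpha>\<in>{0<..1}. g (\<alpha> *\<^sub>R x + (1 - \<alpha>) *\<^sub>R x\<^sub>0) > 0"
  shows "c * (norm (x - x\<^sub>0))\<^sup>2 \<le> \<epsilon>"
proof -
  define d where "d = norm (x - x\<^sub>0)"
  have "c * d\<^sup>2 * (1 - \<alpha>) < \<epsilon>" if \<alpha>: "\<alpha> \<in> {0<..1}" for \<alpha>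
  proof -
    have "g (\<alpha> *\<^sub>R x + (1 - \<alpha>) *\<^sub>R x\<^sub>0) \<le> \<alpha> * g x + (1 - \<alpha>) * g x\<^sub>0 - c * \<alpha> * (1 - \<alpha>) * d\<^sup>2"
      using g \<alpha> unfolding strongly_convex_on_def d_def by simp
    moreover have "\<alpha> * g x \<le> \<alpha> * \<epsilon>" "(1 - \<alpha>) * g x\<^sub>0 \<le> 0"
      using \<alpha> assms(2,3) by (auto intro: mult_left_mono mult_nonneg_nonpos)
    moreover have "0 < g (\<alpha> *\<^sub>R x + (1 - \<alpha>) *\<^sub>R x\<^sub>0)" using pos \<alpha> by blast
    ultimately have "0 < \<alpha> * (\<epsilon> - c * d\<^sup>2 * (1 - \<alpha>))"
      by (simp add: algebra_simps)
    then show ?thesis using \<alpha> by (simp add: zero_less_mult_iff)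
  qed
  then show ?thesis unfolding d_def by (rule le_of_forall_scaled_less[rule_format])
qed

theorem lemma1p1p6:
  fixes fs :: "nat \<Rightarrow> 'a::euclidean_space \<Rightarrow> real"
    and mus :: "nat \<Rightarrow> real"
    and f :: "'a \<Rightarrow> real"
    and m :: nat and xstar y :: 'a and \<epsilon> :: real
  defines "D \<equiv> {x. \<forall>j\<in>{1..m}. fs j x \<le> 0}"
      and "F \<equiv> (\<lambda>x. Max ((\<lambda>j. fs j x) ` {1..m}))"
      and "\<mu> \<equiv> Min (mus ` {1..m})"
  assumes m: "m \<ge> 1"
      and sc: "\<forall>j\<in>{1..m}. mus j > 0 \<and> strongly_convex_on UNIV (fs j) (mus j)"
      and Dj_int: "\<forall>j\<in>{1..m}. interior {x. fs j x \<le> 0} \<noteq> {}"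
      and slater: "\<exists>x. \<forall>j\<in>{1..m}. fs j x < 0"
      and fconv: "convex_on UNIV f"
      and nomin: "\<forall>x. (\<forall>z. f x \<le> f z) \<longrightarrow> x \<notin> interior D"
      and xstar: "xstar \<in> D" "\<forall>x\<in>D. f xstar \<le> f x"
      and eps: "\<epsilon> > 0"
      and y: "F y \<le> \<epsilon>" "y \<noteq> xstar"
      and seg: "\<forall>\<alpha>\<in>{0<..1}. F (\<alpha> *\<^sub>R y + (1 - \<alpha>) *\<^sub>R xstar) > 0"
  shows "norm (y - xstar) \<le> sqrt (\<epsilon> / \<mu>)"
proof -
  have J: "finite {1..m}" "{1..m} \<noteq> {}" using m by auto
  have \<mu>_pos: "\<mu> > 0" using sc J Min_in[of "mus ` {1..m}"] unfolding \<mu>_def by auto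
  have "strongly_convex_on UNIV (fs j) \<mu>" if "j \<in> {1..m}" for j
    using sc that J strongly_convex_on_antimono[of UNIV "fs j" "mus j" \<mu>] by (auto simp: \<mu>_def)
  then have "strongly_convex_on UNIV F \<mu>"
    unfolding F_def using J by (intro strongly_convex_on_Max) auto
  moreover have "F xstar \<le> 0" using xstar(1) J unfolding F_def D_def by simp
  ultimately have "\<mu> * (norm (y - xstar))\<^sup>2 \<le> \<epsilon>"
    using y(1) seg by (intro strongly_convex_on_sqdist_le_of_segment_pos)
  then have "(norm (y - xstar))\<^sup>2 \<le> \<epsilon> / \<mu>"
    using \<mu>_pos by (simp add: field_simps)
  then show ?thesis by (rule real_le_rsqrt)
qed

end
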